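(* Let $D_1,\dots,D_n$ be semi-interlaced polytopes in a finite set $\mathbf P\subset\mathbb Z^n$ with $P=\operatorname{Conv}\mathbf P$, and let $S$ be a suture. Then exactly $\dim S$ of the $D_i$ meet $S$. The polytopes $\{D_i\cap S\mid D_i\cap S\neq\emptyset\}$ are semi-interlaced in $\mathbf P\cap S$, viewed inside $\operatorname{aff}(S)$ with the lattice $\mathbb Z^n\cap\operatorname{aff}(S)$. That is: - each of them is a daughter polytope of $\mathbf P\cap S$; - every face $F$ of $S$ meets at least $\dim F$ of them.
   Context: **Daughter polytope.** For a nonempty polytope $D$ with vertices in a finite set $\mathbf Q$, let $\mathcal D(D)$ be the set of inclusion-maximal faces of $\operatorname{Conv}\mathbf Q$ disjoint from $D$. $D$ is a daughter polytope of $\mathbf Q$ if: 1. distinct members of $\mathcal D(D)$ are disjoint; 2. $D=\operatorname{Conv}(\mathbf Q\setminus\bigcup_{G\in\mathcal D(D)}G)$. **Semi-interlaced and sutures.** Daughter polytopes $D_1,\dots,D_n$ of $\mathbf P\subset\mathbb Z^n$ are semi-interlaced in $\mathbf P$ if every face $F$ of $P$ meets at least $\dim F$ of them. A suture is a face of $P$ meeting exactly $\dim F$ of them. *)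

theory Defs
  imports "HOL-Analysis.Analysis"
begin

definition maximal_disjoint_faces :: "('a::euclidean_space) set \<Rightarrow> 'a set \<Rightarrow> 'a set set" where
  "maximal_disjoint_faces Q D =
     {G. G face_of convex hull Q \<and> G \<inter> D = {} \<and>
         (\<forall>G'. G' face_of convex hull Q \<and> G' \<inter> D = {} \<and> G \<subseteq> G' \<longrightarrow> G' = G)}"

definition daughter_polytope :: "('a::euclidean_space) set \<Rightarrow> 'a set \<Rightarrow> bool" where
  "daughter_polytope Q D \<longleftrightarrow>
     D \<noteq> {} \<and> (\<exists>V. V \<subseteq> Q \<and> D = convex hull V) \<and>
     (\<forall>G\<in>maximal_disjoint_faces Q D. \<forall>G'\<in>maximal_disjoint_faces Q D. G \<noteq> G' \<longrightarrow> G \<inter> G' = {}) \<and>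
     D = convex hull (Q - \<Union>(maximal_disjoint_faces Q D))"

definition semi_interlaced :: "('a::euclidean_space) set \<Rightarrow> 'i set \<Rightarrow> ('i \<Rightarrow> 'a set) \<Rightarrow> bool" where
  "semi_interlaced Q I D \<longleftrightarrow>
     (\<forall>i\<in>I. daughter_polytope Q (D i)) \<and>
     (\<forall>F. F face_of convex hull Q \<longrightarrow> aff_dim F \<le> int (card {i\<in>I. D i \<inter> F \<noteq> {}}))"

definition suture :: "('a::euclidean_space) set \<Rightarrow> 'i set \<Rightarrow> ('i \<Rightarrow> 'a set) \<Rightarrow> 'a set \<Rightarrow> bool" where
  "suture Q I D S \<longleftrightarrow>
     S face_of convex hull Q \<and> int (card {i\<in>I. D i \<inter> S \<noteq> {}}) = aff_dim S"

definition lattice_points :: "(real^'n) set" where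
  "lattice_points = {x. \<forall>k. x $ k \<in> \<int>}"

end

theory Submission
  imports Defs
begin

(* Restriction to a face S of Conv P commutes with everything in sight: the faces of S are the
   faces of Conv P inside S, every maximal face of S disjoint from D \<inter> S is the trace on S of a
   maximal face of Conv P disjoint from D, and the trace of a convex hull of points of P on S is
   the hull of the points of P in S.  Hence each nonempty D i \<inter> S is a daughter polytope of
   P \<inter> S, and a face F of S meets D i \<inter> S exactly when it meets D i, so the counting
   condition for F is inherited from Conv P.  The suture hypothesis gives the count on S itself. *)

lemma convex_hull_Int_face_eq:
  fixes V :: "'a::euclidean_space set"
  assumes "compact V" and T: "T face_of convex hull V"
  shows "convex hull (V \<inter> T) = T"
proof
  show "convex hull (V \<inter> T) \<subseteq> T"
    by (rule hull_minimal) (simp_all add: face_of_imp_convex[OF T])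
  obtain V' where V': "V' \<subseteq> V" "T = convex hull V'"
    using face_of_convex_hull_subset[OF assms] .
  have "V' \<subseteq> V \<inter> convex hull V'"
    using V'(1) hull_subset[of V' convex] by (rule Int_greatest)
  then show "T \<subseteq> convex hull (V \<inter> T)"
    unfolding V'(2) by (rule hull_mono)
qed

lemma convex_hull_Int_face:
  fixes V :: "'a::euclidean_space set"
  assumes "compact V" and "S face_of K" and "convex hull V \<subseteq> K"
  shows "convex hull V \<inter> S = convex hull (V \<inter> S)"
proof -
  have "(S \<inter> convex hull V) face_of (K \<inter> convex hull V)"
    using face_of_slice[OF assms(2) convex_convex_hull] .
  then have face: "(convex hull V \<inter> S) face_of convex hull V"
    using assms(3) by (metis Int_absorb2 Int_commute)
  have "V \<inter> (convex hull V \<inter> S) = V \<inter> S"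
    using hull_subset[of V convex] by blast
  with convex_hull_Int_face_eq[OF assms(1) face] show ?thesis
    by simp
qed

lemma maximal_disjoint_facesD:
  assumes "G \<in> maximal_disjoint_faces Q D"
  shows "G face_of convex hull Q" and "G \<inter> D = {}"
  using assms unfolding maximal_disjoint_faces_def by auto

lemma ex_maximal_disjoint_face:
  fixes Q :: "'a::euclidean_space set"
  assumes "finite Q" and "F face_of convex hull Q" and "F \<inter> D = {}"
  obtains G where "G \<in> maximal_disjoint_faces Q D" and "F \<subseteq> G"
proof -
  define A where "A = {G. G face_of convex hull Q \<and> G \<inter> D = {} \<and> F \<subseteq> G}"
  have "A \<subseteq> {G. G face_of convex hull Q}"
    unfolding A_def by blast
  then have "finite A"
    using finite_polytope_faces[OF polytope_convex_hull[OF assms(1)]] by (rule finite_subset)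
  moreover have "F \<in> A"
    unfolding A_def using assms(2,3) by blast
  ultimately obtain G where G: "G \<in> A" and max: "\<And>G'. G' \<in> A \<Longrightarrow> G \<subseteq> G' \<Longrightarrow> G = G'"
    using finite_has_maximal[of A] by blast
  have FG: "F \<subseteq> G"
    using G unfolding A_def by blast
  show ?thesis
  proof (rule that[OF _ FG], unfold maximal_disjoint_faces_def, intro CollectI conjI allI impI)
    show "G face_of convex hull Q" "G \<inter> D = {}"
      using G unfolding A_def by blast+
    fix G' assume G': "G' face_of convex hull Q \<and> G' \<inter> D = {} \<and> G \<subseteq> G'"
    with FG have "G' \<in> A"
      unfolding A_def by blast
    with G' show "G' = G"
      by (metis max)
  qed
qed

context
  fixes P S :: "'a::euclidean_space set"
  assumes P: "finite P" and S: "S face_of convex hull P"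
begin

lemma convex_hull_Int_face_points: "convex hull (P \<inter> S) = S"
  using convex_hull_Int_face_eq[OF finite_imp_compact[OF P] S] .

lemma face_of_convex_hull_Int_face_iff:
  "F face_of convex hull (P \<inter> S) \<longleftrightarrow> F face_of convex hull P \<and> F \<subseteq> S"
  unfolding convex_hull_Int_face_points by (rule face_of_face[OF S])

lemma maximal_disjoint_faces_Int_face:
  assumes "F \<in> maximal_disjoint_faces (P \<inter> S) (D \<inter> S)"
  obtains G where "G \<in> maximal_disjoint_faces P D" and "F = G \<inter> S"
proof -
  have F: "F face_of convex hull P" "F \<subseteq> S" "F \<inter> D = {}"
    using maximal_disjoint_facesD[OF assms] face_of_convex_hull_Int_face_iff by blast+
  obtain G where G: "G \<in> maximal_disjoint_faces P D" "F \<subseteq> G"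
    using ex_maximal_disjoint_face[OF P F(1,3)] .
  have "(G \<inter> S) face_of convex hull P"
    using face_of_Int[OF maximal_disjoint_facesD(1)[OF G(1)] S] .
  then have "(G \<inter> S) face_of convex hull (P \<inter> S)"
    by (simp add: face_of_convex_hull_Int_face_iff)
  moreover have "G \<inter> S \<inter> (D \<inter> S) = {}"
    using maximal_disjoint_facesD(2)[OF G(1)] by blast
  moreover have "F \<subseteq> G \<inter> S"
    using F(2) G(2) by blast
  ultimately have "F = G \<inter> S"
    using assms unfolding maximal_disjoint_faces_def by blast
  with G(1) show ?thesis
    using that by blast
qed

lemma Union_maximal_disjoint_faces_Int_face:
  "\<Union>(maximal_disjoint_faces (P \<inter> S) (D \<inter> S)) = S \<inter> \<Union>(maximal_disjoint_faces P D)"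
proof
  show "\<Union>(maximal_disjoint_faces (P \<inter> S) (D \<inter> S)) \<subseteq> S \<inter> \<Union>(maximal_disjoint_faces P D)"
    by (blast elim: maximal_disjoint_faces_Int_face)
  show "S \<inter> \<Union>(maximal_disjoint_faces P D) \<subseteq> \<Union>(maximal_disjoint_faces (P \<inter> S) (D \<inter> S))"
  proof
    fix x assume "x \<in> S \<inter> \<Union>(maximal_disjoint_faces P D)"
    then obtain G where G: "G \<in> maximal_disjoint_faces P D" and x: "x \<in> G \<inter> S"
      by blast
    have "(G \<inter> S) face_of convex hull (P \<inter> S)"
      using face_of_Int[OF maximal_disjoint_facesD(1)[OF G] S]
      by (simp add: face_of_convex_hull_Int_face_iff)
    moreover have "G \<inter> S \<inter> (D \<inter> S) = {}"
      using maximal_disjoint_facesD(2)[OF G] by blast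
    ultimately obtain F where "F \<in> maximal_disjoint_faces (P \<inter> S) (D \<inter> S)" "G \<inter> S \<subseteq> F"
      using ex_maximal_disjoint_face[of "P \<inter> S"] P by blast
    with x show "x \<in> \<Union>(maximal_disjoint_faces (P \<inter> S) (D \<inter> S))"
      by blast
  qed
qed

lemma daughter_polytope_Int_face:
  assumes dp: "daughter_polytope P D" and ne: "D \<inter> S \<noteq> {}"
  shows "daughter_polytope (P \<inter> S) (D \<inter> S)"
proof -
  let ?M = "maximal_disjoint_faces P D"
  let ?M' = "maximal_disjoint_faces (P \<inter> S) (D \<inter> S)"
  have disjoint: "\<forall>G\<in>?M. \<forall>G'\<in>?M. G \<noteq> G' \<longrightarrow> G \<inter> G' = {}"
    using dp unfolding daughter_polytope_def by blast
  have D: "D = convex hull (P - \<Union>?M)"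
    using dp unfolding daughter_polytope_def by (elim conjE)
  have disjoint': "\<forall>F\<in>?M'. \<forall>F'\<in>?M'. F \<noteq> F' \<longrightarrow> F \<inter> F' = {}"
  proof (intro ballI impI)
    fix F F' assume "F \<in> ?M'" "F' \<in> ?M'" "F \<noteq> F'"
    then obtain G G' where "G \<in> ?M" "F = G \<inter> S" "G' \<in> ?M" "F' = G' \<inter> S"
      by (metis maximal_disjoint_faces_Int_face)
    with \<open>F \<noteq> F'\<close> show "F \<inter> F' = {}"
      using disjoint by blast
  qed
  \<comment> \<open>D occurs on both sides of the equation D, so it must not be used as a rewrite rule.\<close>
  have "D \<inter> S = convex hull (P - \<Union>?M) \<inter> S"
    using arg_cong[where f="\<lambda>X. X \<inter> S", OF D] .
  also have "\<dots> = convex hull ((P - \<Union>?M) \<inter> S)"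
    using P by (intro convex_hull_Int_face[OF _ S]) (simp_all add: finite_imp_compact hull_mono)
  also have "(P - \<Union>?M) \<inter> S = P \<inter> S - \<Union>?M'"
    using Union_maximal_disjoint_faces_Int_face by blast
  finally have D': "D \<inter> S = convex hull (P \<inter> S - \<Union>?M')" .
  show ?thesis
    unfolding daughter_polytope_def
  proof (intro conjI exI)
    show "P \<inter> S - \<Union>?M' \<subseteq> P \<inter> S"
      by (rule Diff_subset)
  qed (fact ne disjoint' D')+
qed

lemma semi_interlaced_Int_face:
  assumes "semi_interlaced P I D"
  shows "semi_interlaced (P \<inter> S) {i\<in>I. D i \<inter> S \<noteq> {}} (\<lambda>i. D i \<inter> S)"
  unfolding semi_interlaced_def
proof (intro conjI ballI allI impI)
  fix i assume i: "i \<in> {i\<in>I. D i \<inter> S \<noteq> {}}"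
  then have "daughter_polytope P (D i)"
    using assms unfolding semi_interlaced_def by blast
  with i show "daughter_polytope (P \<inter> S) (D i \<inter> S)"
    by (simp add: daughter_polytope_Int_face)
next
  fix F assume "F face_of convex hull (P \<inter> S)"
  then have F: "F face_of convex hull P" "F \<subseteq> S"
    by (simp_all add: face_of_convex_hull_Int_face_iff)
  have "{i\<in>{i\<in>I. D i \<inter> S \<noteq> {}}. D i \<inter> S \<inter> F \<noteq> {}} = {i\<in>I. D i \<inter> F \<noteq> {}}"
    using F(2) by blast
  then show "aff_dim F \<le> int (card {i\<in>{i\<in>I. D i \<inter> S \<noteq> {}}. D i \<inter> S \<inter> F \<noteq> {}})"
    using assms F(1) unfolding semi_interlaced_def by simp
qed

end

theorem mainTheorem7:
  fixes P :: "(real^'n) set" and D :: "'n \<Rightarrow> (real^'n) set" and S :: "(real^'n) set"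
  assumes "finite P" and "P \<subseteq> lattice_points"
    and "semi_interlaced P UNIV D"
    and "suture P UNIV D S"
  shows "int (card {i. D i \<inter> S \<noteq> {}}) = aff_dim S
    \<and> semi_interlaced (P \<inter> S) {i. D i \<inter> S \<noteq> {}} (\<lambda>i. D i \<inter> S)"
proof
  show "int (card {i. D i \<inter> S \<noteq> {}}) = aff_dim S"
    using assms(4) by (simp add: suture_def)
  have "S face_of convex hull P"
    using assms(4) by (simp add: suture_def)
  then show "semi_interlaced (P \<inter> S) {i. D i \<inter> S \<noteq> {}} (\<lambda>i. D i \<inter> S)"
    using semi_interlaced_Int_face[OF assms(1) _ assms(3)] by simp
qed

end
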